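(* Let $k,l,m,n$ be positive integers with $k^n\equiv 1\pmod m$ and $l(k-1)\equiv 0\pmod m$, and let $G=\langle a,b;\ a^m=1,\ b^n=a^l,\ b^{-1}ab=a^k\rangle$. Then $G$ has trivial centre if and only if $(m,k-1)=1$ and $n=\mathrm{ind}_m(k)$.
   Context: $\mathrm{ind}_m(k)$ is the least positive integer $d$ with $k^d\equiv 1\pmod m$. *)

theory Defs
  imports "HOL-Algebra.Algebra" "HOL-Number_Theory.Cong"
begin

definition ind_mod :: "nat \<Rightarrow> nat \<Rightarrow> nat" where
  "ind_mod m k = (LEAST d. 0 < d \<and> [k ^ d = 1] (mod m))"

definition group_center :: "('a, 'b) monoid_scheme \<Rightarrow> 'a set" where
  "group_center G = {x \<in> carrier G. \<forall>y \<in> carrier G. x \<otimes>\<^bsub>G\<^esub> y = y \<otimes>\<^bsub>G\<^esub> x}"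

definition meta_rels ::
  "('c, 'd) monoid_scheme \<Rightarrow> 'c \<Rightarrow> 'c \<Rightarrow> nat \<Rightarrow> nat \<Rightarrow> nat \<Rightarrow> nat \<Rightarrow> bool" where
  "meta_rels H x y m n k l \<longleftrightarrow>
     x \<in> carrier H \<and> y \<in> carrier H \<and>
     x [^]\<^bsub>H\<^esub> m = \<one>\<^bsub>H\<^esub> \<and>
     y [^]\<^bsub>H\<^esub> n = x [^]\<^bsub>H\<^esub> l \<and>
     inv\<^bsub>H\<^esub> y \<otimes>\<^bsub>H\<^esub> x \<otimes>\<^bsub>H\<^esub> y = x [^]\<^bsub>H\<^esub> k"

text \<open>The universal property is quantified over groups
  whose carrier lives in the countable type nat; since finitely presented groups
  are countable this determines G up to isomorphism.\<close>
definition presents_meta ::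
  "('g, 'e) monoid_scheme \<Rightarrow> 'g \<Rightarrow> 'g \<Rightarrow> nat \<Rightarrow> nat \<Rightarrow> nat \<Rightarrow> nat \<Rightarrow> bool" where
  "presents_meta G a b m n k l \<longleftrightarrow>
     group G \<and> meta_rels G a b m n k l \<and>
     generate G {a, b} = carrier G \<and>
     (\<forall>(H :: nat monoid) x y. group H \<and> meta_rels H x y m n k l \<longrightarrow>
        (\<exists>h \<in> hom G H. h a = x \<and> h b = y))"

end

theory Submission
  imports Defs
begin

(* Every element of G is a product b^J a^I, and b^J a^I b^J' a^I' = b^(J+J') a^(I k^J' + I').
   Reducing J modulo n with b^n = a^l and I modulo m with a^m = 1 turns this product rule into
   a group structure on the n*m normal forms b^j a^i (j < n, i < m); the hypotheses
   k^n = 1 and l k = l (mod m) are exactly what makes the reduction compatible with the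
   product.  Mapping G onto this model shows that normal forms are unique.  Hence b^j a^i is
   central iff it commutes with a and with b, i.e. iff k^j = 1 and i k = i (mod m), and the
   only such normal form is 1 iff n is the order of k modulo m and gcd m (k - 1) = 1. *)

lemma cong_mult_power_fixed:
  fixes c k m :: nat
  assumes "[c * k = c] (mod m)"
  shows "[c * k ^ j = c] (mod m)"
proof (induction j)
  case 0
  show ?case by simp
next
  case (Suc j)
  have "[c * k ^ Suc j = (c * k ^ j) * k] (mod m)"
    by (simp add: ac_simps)
  also have "[(c * k ^ j) * k = c * k] (mod m)"
    using Suc by (rule cong_mult) simp
  finally show ?case
    using assms by (rule cong_trans)
qed

lemma cong_mult_eq_self_iff_dvd:
  fixes i k m :: nat
  assumes "0 < k"
  shows "[i * k = i] (mod m) \<longleftrightarrow> m dvd i * (k - 1)"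
  using assms by (simp add: cong_altdef_nat right_diff_distrib')

lemma div_add_mod_add_div:
  fixes a b c :: nat
  shows "a div c + (a mod c + b) div c = (a + b) div c"
  using div_add1_eq[of a b c] div_add1_eq[of "a mod c" b c] by simp

lemma gcd_eq_1_iff_annihilator_trivial:
  fixes m c :: nat
  assumes "0 < m"
  shows "gcd m c = 1 \<longleftrightarrow> (\<forall>i<m. m dvd i * c \<longrightarrow> i = 0)"
proof
  assume "gcd m c = 1"
  then show "\<forall>i<m. m dvd i * c \<longrightarrow> i = 0"
    by (auto simp: coprime_dvd_mult_left_iff coprime_iff_gcd_eq_1 dest: dvd_imp_le)
next
  assume trivial: "\<forall>i<m. m dvd i * c \<longrightarrow> i = 0"
  define d where "d = gcd m c"
  have d: "0 < d" "d \<le> m" "d dvd m" "d dvd c"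
    using assms by (simp_all add: d_def gcd_le1_nat)
  have "m dvd (m div d) * c"
    using d by (metis dvd_div_mult dvd_triv_left div_mult_swap)
  moreover have "0 < m div d"
    using d by (simp add: div_greater_zero_iff)
  ultimately have "\<not> m div d < m"
    using trivial by auto
  then have "d = 1"
    using d div_less_dividend[of d m] by linarith
  then show "gcd m c = 1"
    by (simp add: d_def)
qed

lemma ind_mod_eq_iff:
  assumes "0 < n" "[k ^ n = 1] (mod m)"
  shows "n = ind_mod m k \<longleftrightarrow> (\<forall>j<n. [k ^ j = 1] (mod m) \<longrightarrow> j = 0)"
  unfolding ind_mod_def
proof
  assume "n = (LEAST d. 0 < d \<and> [k ^ d = 1] (mod m))"
  then show "\<forall>j<n. [k ^ j = 1] (mod m) \<longrightarrow> j = 0"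
    using not_less_Least by fastforce
next
  assume "\<forall>j<n. [k ^ j = 1] (mod m) \<longrightarrow> j = 0"
  then show "n = (LEAST d. 0 < d \<and> [k ^ d = 1] (mod m))"
    using assms by (intro Least_equality[symmetric]) (auto simp: not_less[symmetric])
qed

lemma (in group) conjugate_eq_iff:
  assumes "x \<in> carrier G" "y \<in> carrier G" "z \<in> carrier G"
  shows "inv y \<otimes> x \<otimes> y = z \<longleftrightarrow> x \<otimes> y = y \<otimes> z"
  using assms by (simp add: m_assoc inv_solve_left')

lemma (in group) commute_generate:
  assumes "S \<subseteq> carrier G" "z \<in> carrier G" "\<And>s. s \<in> S \<Longrightarrow> z \<otimes> s = s \<otimes> z"
    and "y \<in> generate G S"
  shows "z \<otimes> y = y \<otimes> z"
  using assms(4)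
proof (induction rule: generate.induct)
  case one
  show ?case
    using assms(2) by simp
next
  case (incl s)
  then show ?case
    by (rule assms(3))
next
  case (inv s)
  then have s: "s \<in> carrier G" "z \<otimes> s = s \<otimes> z"
    using assms(1,3) by auto
  then have "inv s \<otimes> z \<otimes> s = z"
    using assms(2) by (simp add: conjugate_eq_iff)
  then show ?case
    using inv_solve_right[of "inv s \<otimes> z" z s] s(1) assms(2) by auto
next
  case (eng y y')
  have y: "y \<in> carrier G" "y' \<in> carrier G"
    using eng.hyps generate_in_carrier[OF assms(1)] by auto
  have "z \<otimes> (y \<otimes> y') = (z \<otimes> y) \<otimes> y'"
    using y assms(2) by (simp add: m_assoc)
  also have "\<dots> = y \<otimes> (z \<otimes> y')"
    using y assms(2) by (simp add: eng.IH m_assoc)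
  also have "\<dots> = (y \<otimes> y') \<otimes> z"
    using y assms(2) by (simp add: eng.IH m_assoc)
  finally show ?case .
qed

lemma (in group) group_center_generate_iff:
  assumes "generate G S = carrier G" "S \<subseteq> carrier G"
  shows "z \<in> group_center G \<longleftrightarrow> z \<in> carrier G \<and> (\<forall>s\<in>S. z \<otimes> s = s \<otimes> z)"
  using commute_generate[OF assms(2)] assms by (auto simp: group_center_def)

locale metacyclic_params =
  fixes m n k l :: nat
  assumes m_pos: "0 < m" and n_pos: "0 < n"
    and k_pow_n: "[k ^ n = 1] (mod m)" and l_mult_k: "[l * k = l] (mod m)"
begin

(* A pair (J, I) stands for b^J a^I; encode gives the code j * m + i of its normal form. *)

fun twisted_mult :: "nat \<times> nat \<Rightarrow> nat \<times> nat \<Rightarrow> nat \<times> nat" (infixl "\<star>" 70) where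
  "(J, I) \<star> (J', I') = (J + J', I * k ^ J' + I')"

lemma twisted_mult_assoc: "(p \<star> q) \<star> r = p \<star> (q \<star> r)"
  by (cases p; cases q; cases r) (simp add: algebra_simps power_add)

fun encode :: "nat \<times> nat \<Rightarrow> nat" where
  "encode (J, I) = (J mod n) * m + (I + l * (J div n)) mod m"

definition decode :: "nat \<Rightarrow> nat \<times> nat" where
  "decode x = (x div m, x mod m)"

lemma encode_less: "encode p < n * m"
proof (cases p)
  case (Pair J I)
  have "(J mod n) * m + (I + l * (J div n)) mod m < Suc (J mod n) * m"
    using m_pos by simp
  also have "\<dots> \<le> n * m"
    using n_pos by (intro mult_le_mono1) (simp add: Suc_leI)
  finally show ?thesis
    by (simp add: Pair)
qed

lemma decode_encode: "decode (encode (J, I)) = (J mod n, (I + l * (J div n)) mod m)"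
  using m_pos by (simp add: decode_def)

lemma encode_decode: "x < n * m \<Longrightarrow> encode (decode x) = x"
  using m_pos by (simp add: decode_def less_mult_imp_div_less)

lemma encode_normal_inj:
  assumes "j < n" "i < m" "j' < n" "i' < m" "encode (j, i) = encode (j', i')"
  shows "j = j' \<and> i = i'"
proof -
  have "decode (encode (j, i)) = (j, i)" "decode (encode (j', i')) = (j', i')"
    using assms(1-4) by (simp_all only: decode_encode) simp_all
  then show ?thesis
    using assms(5) by (metis prod.inject)
qed

lemma encode_eqI:
  assumes "J mod n = J' mod n" "[I + l * (J div n) = I' + l * (J' div n)] (mod m)"
  shows "encode (J, I) = encode (J', I')"
  using assms by (simp add: cong_def)

lemma encode_decode_mult_left: "encode (decode (encode p) \<star> q) = encode (p \<star> q)"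
proof (cases p; cases q)
  fix J I J' I' assume p: "p = (J, I)" and q: "q = (J', I')"
  have "[((I + l * (J div n)) mod m) * k ^ J' = I * k ^ J' + (l * k ^ J') * (J div n)] (mod m)"
    unfolding cong_def mod_mult_left_eq by (simp add: algebra_simps)
  also have "[I * k ^ J' + (l * k ^ J') * (J div n) = I * k ^ J' + l * (J div n)] (mod m)"
    by (intro cong_add cong_mult cong_refl cong_mult_power_fixed l_mult_k)
  finally have "[((I + l * (J div n)) mod m) * k ^ J' + I' + l * ((J mod n + J') div n)
      = (I * k ^ J' + l * (J div n)) + I' + l * ((J mod n + J') div n)] (mod m)"
    by (intro cong_add cong_refl)
  also have "(I * k ^ J' + l * (J div n)) + I' + l * ((J mod n + J') div n)
      = I * k ^ J' + I' + l * ((J + J') div n)"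
    unfolding div_add_mod_add_div[of J n J', symmetric] by (simp add: algebra_simps)
  finally show ?thesis
    unfolding p q decode_encode twisted_mult.simps by (intro encode_eqI) (simp_all add: mod_add_left_eq)
qed

lemma k_pow_mod_n: "[k ^ (J mod n) = k ^ J] (mod m)"
proof -
  have "[k ^ (J mod n) = (k ^ n) ^ (J div n) * k ^ (J mod n)] (mod m)"
    using cong_mult[OF cong_pow[OF k_pow_n, of "J div n"] cong_refl[of "k ^ (J mod n)"]]
    by (simp add: cong_sym)
  also have "(k ^ n) ^ (J div n) * k ^ (J mod n) = k ^ J"
    by (simp flip: power_mult power_add)
  finally show ?thesis .
qed

lemma encode_decode_mult_right: "encode (p \<star> decode (encode q)) = encode (p \<star> q)"
proof (cases p; cases q)
  fix J I J' I' assume p: "p = (J, I)" and q: "q = (J', I')"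
  have "[I * k ^ (J' mod n) + (I' + l * (J' div n)) mod m + l * ((J + J' mod n) div n)
      = I * k ^ J' + (I' + l * (J' div n)) + l * ((J + J' mod n) div n)] (mod m)"
    by (intro cong_add cong_mult cong_refl k_pow_mod_n) simp
  also have "I * k ^ J' + (I' + l * (J' div n)) + l * ((J + J' mod n) div n)
      = I * k ^ J' + I' + l * ((J + J') div n)"
  proof -
    have "J' div n + (J + J' mod n) div n = (J + J') div n"
      using div_add_mod_add_div[of J' n J] by (simp add: add.commute)
    then show ?thesis
      by (simp add: algebra_simps flip: distrib_left)
  qed
  finally show ?thesis
    unfolding p q decode_encode twisted_mult.simps by (intro encode_eqI) (simp_all add: mod_add_right_eq)
qed

(* presents_meta quantifies only over groups with carrier in nat, hence a model on codes. *)

definition model :: "nat monoid" where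
  "model = \<lparr>carrier = {..< n * m}, monoid.mult = \<lambda>x y. encode (decode x \<star> decode y), one = 0\<rparr>"

lemma model_mult_encode: "encode p \<otimes>\<^bsub>model\<^esub> encode q = encode (p \<star> q)"
  by (simp add: model_def encode_decode_mult_left encode_decode_mult_right)

lemma model_one: "\<one>\<^bsub>model\<^esub> = encode (0, 0)"
  by (simp add: model_def)

lemma model_carrier: "carrier model = range encode"
proof -
  have "x \<in> range encode" if "x < n * m" for x
    using encode_decode[OF that] by (metis rangeI)
  then show ?thesis
    using encode_less by (auto simp: model_def)
qed

lemma model_left_inverse:
  assumes "j \<le> n"
  shows "encode (n - j, (m - (i + l) mod m) * k ^ (n - j)) \<otimes>\<^bsub>model\<^esub> encode (j, i) = \<one>\<^bsub>model\<^esub>"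
proof -
  define r where "r = (i + l) mod m"
  have "[(m - r) * k ^ n + i + l * (n div n) = 0 + l * (0 div n)] (mod m)"
  proof -
    have "(m - r) * k ^ n + i + l * (n div n) = (m - r) * k ^ n + (i + l)"
      using n_pos by simp
    also have "[(m - r) * k ^ n + (i + l) = (m - r) * 1 + r] (mod m)"
      unfolding r_def by (intro cong_add cong_mult cong_refl k_pow_n) simp
    also have "(m - r) * 1 + r = m"
      using m_pos by (simp add: r_def)
    finally show ?thesis
      by (simp add: cong_def)
  qed
  then have "encode (n, (m - r) * k ^ n + i) = encode (0, 0)"
    by (intro encode_eqI) simp_all
  moreover have "(n - j, (m - r) * k ^ (n - j)) \<star> (j, i) = (n, (m - r) * k ^ n + i)"
    using assms by (simp add: mult.assoc flip: power_add)
  ultimately show ?thesis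
    unfolding r_def[symmetric] by (simp only: model_mult_encode model_one)
qed

lemma model_group: "group model"
proof (rule groupI)
  show "\<one>\<^bsub>model\<^esub> \<in> carrier model"
    unfolding model_carrier model_one by (rule rangeI)
next
  fix x y assume "x \<in> carrier model" "y \<in> carrier model"
  then obtain p q where "x = encode p" "y = encode q"
    unfolding model_carrier by blast
  then show "x \<otimes>\<^bsub>model\<^esub> y \<in> carrier model"
    by (simp add: model_carrier model_mult_encode del: encode.simps)
next
  fix x y z assume "x \<in> carrier model" "y \<in> carrier model" "z \<in> carrier model"
  then obtain p q r where "x = encode p" "y = encode q" "z = encode r"
    unfolding model_carrier by blast
  then show "x \<otimes>\<^bsub>model\<^esub> y \<otimes>\<^bsub>model\<^esub> z = x \<otimes>\<^bsub>model\<^esub> (y \<otimes>\<^bsub>model\<^esub> z)"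
    by (simp only: model_mult_encode twisted_mult_assoc)
next
  fix x assume "x \<in> carrier model"
  then have "x < n * m"
    by (simp add: model_def)
  define j i where "j = x div m" and "i = x mod m"
  have x: "x = encode (j, i)"
    using encode_decode[OF \<open>x < n * m\<close>] by (simp only: decode_def j_def i_def)
  have "j \<le> n"
    using \<open>x < n * m\<close> by (simp add: j_def less_mult_imp_div_less less_imp_le)
  show "\<one>\<^bsub>model\<^esub> \<otimes>\<^bsub>model\<^esub> x = x"
    by (simp add: x model_one model_mult_encode del: encode.simps)
  show "\<exists>y\<in>carrier model. y \<otimes>\<^bsub>model\<^esub> x = \<one>\<^bsub>model\<^esub>"
    using model_left_inverse[OF \<open>j \<le> n\<close>, of i] unfolding x model_carrier by blast
qed

definition model_a :: nat where
  "model_a = encode (0, 1)"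

definition model_b :: nat where
  "model_b = encode (1, 0)"

lemma model_a_pow: "model_a [^]\<^bsub>model\<^esub> i = encode (0, i)"
  by (induction i) (simp_all add: model_a_def model_one model_mult_encode del: encode.simps)

lemma model_b_pow: "model_b [^]\<^bsub>model\<^esub> j = encode (j, 0)"
  by (induction j) (simp_all add: model_b_def model_one model_mult_encode del: encode.simps)

lemma model_normal_form: "model_b [^]\<^bsub>model\<^esub> j \<otimes>\<^bsub>model\<^esub> model_a [^]\<^bsub>model\<^esub> i = encode (j, i)"
  by (simp add: model_a_pow model_b_pow model_mult_encode del: encode.simps)

lemma model_rels: "meta_rels model model_a model_b m n k l"
proof -
  have closed: "model_a \<in> carrier model" "model_b \<in> carrier model"
    "model_a [^]\<^bsub>model\<^esub> k \<in> carrier model"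
    unfolding model_carrier model_a_pow by (simp_all only: model_a_def model_b_def rangeI)
  have "model_a \<otimes>\<^bsub>model\<^esub> model_b = model_b \<otimes>\<^bsub>model\<^esub> model_a [^]\<^bsub>model\<^esub> k"
    unfolding model_a_pow unfolding model_a_def model_b_def model_mult_encode by simp
  then have "inv\<^bsub>model\<^esub> model_b \<otimes>\<^bsub>model\<^esub> model_a \<otimes>\<^bsub>model\<^esub> model_b = model_a [^]\<^bsub>model\<^esub> k"
    using group.conjugate_eq_iff[OF model_group closed] by blast
  moreover have "model_a [^]\<^bsub>model\<^esub> m = \<one>\<^bsub>model\<^esub>"
    by (simp add: model_a_pow model_one)
  moreover have "model_b [^]\<^bsub>model\<^esub> n = model_a [^]\<^bsub>model\<^esub> l"
    using n_pos by (simp add: model_a_pow model_b_pow)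
  ultimately show ?thesis
    using closed unfolding meta_rels_def by blast
qed

end

locale metacyclic_group = metacyclic_params m n k l + group G
  for m n k l :: nat and G (structure) +
  fixes a b :: 'a
  assumes rels: "meta_rels G a b m n k l"
begin

lemma a_closed [simp]: "a \<in> carrier G"
  and b_closed [simp]: "b \<in> carrier G"
  and a_pow_m: "a [^] m = \<one>"
  and b_pow_n: "b [^] n = a [^] l"
  and a_mult_b: "a \<otimes> b = b \<otimes> a [^] k"
proof -
  show "a \<in> carrier G" "b \<in> carrier G" "a [^] m = \<one>" "b [^] n = a [^] l"
    using rels by (simp_all add: meta_rels_def)
  then show "a \<otimes> b = b \<otimes> a [^] k"
    using rels conjugate_eq_iff[of a b "a [^] k"] by (simp add: meta_rels_def)
qed

lemma a_pow_mult_b: "a [^] i \<otimes> b = b \<otimes> a [^] (i * k)"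
proof (induction i)
  case 0
  show ?case by simp
next
  case (Suc i)
  have "a [^] Suc i \<otimes> b = (a [^] i \<otimes> b) \<otimes> a [^] k"
    by (simp add: a_mult_b m_assoc)
  also have "\<dots> = b \<otimes> (a [^] (i * k) \<otimes> a [^] k)"
    by (simp add: Suc m_assoc)
  finally show ?case
    by (simp add: nat_pow_mult add.commute)
qed

lemma a_pow_mult_b_pow: "a [^] i \<otimes> b [^] j = b [^] j \<otimes> a [^] (i * k ^ j)"
proof (induction j)
  case 0
  show ?case by simp
next
  case (Suc j)
  have "a [^] i \<otimes> b [^] Suc j = (a [^] i \<otimes> b [^] j) \<otimes> b"
    by (simp add: m_assoc)
  also have "\<dots> = b [^] j \<otimes> (a [^] (i * k ^ j) \<otimes> b)"
    by (simp add: Suc m_assoc)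
  also have "\<dots> = b [^] Suc j \<otimes> a [^] (i * k ^ Suc j)"
    by (simp add: a_pow_mult_b m_assoc mult_ac)
  finally show ?case .
qed

lemma normal_form_mult:
  "(b [^] J \<otimes> a [^] I) \<otimes> (b [^] J' \<otimes> a [^] I') = b [^] (J + J') \<otimes> a [^] (I * k ^ J' + I')"
proof -
  have "(b [^] J \<otimes> a [^] I) \<otimes> (b [^] J' \<otimes> a [^] I') = b [^] J \<otimes> ((a [^] I \<otimes> b [^] J') \<otimes> a [^] I')"
    by (simp add: m_assoc)
  also have "\<dots> = (b [^] J \<otimes> b [^] J') \<otimes> (a [^] (I * k ^ J') \<otimes> a [^] I')"
    by (simp add: a_pow_mult_b_pow m_assoc)
  finally show ?thesis
    by (simp add: nat_pow_mult)
qed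

lemma a_pow_mod: "a [^] i = a [^] (i mod m)"
proof -
  have "a [^] i = (a [^] m) [^] (i div m) \<otimes> a [^] (i mod m)"
    by (simp add: nat_pow_pow nat_pow_mult)
  then show ?thesis
    by (simp add: a_pow_m)
qed

lemma normal_form_reduce: "b [^] J \<otimes> a [^] I = b [^] (J mod n) \<otimes> a [^] ((I + l * (J div n)) mod m)"
proof -
  have "b [^] J = b [^] (J mod n) \<otimes> (b [^] n) [^] (J div n)"
    by (simp add: nat_pow_pow nat_pow_mult)
  then have "b [^] J \<otimes> a [^] I = b [^] (J mod n) \<otimes> a [^] (I + l * (J div n))"
    by (simp add: b_pow_n nat_pow_pow m_assoc nat_pow_mult add.commute)
  then show ?thesis
    using a_pow_mod[of "I + l * (J div n)"] by simp
qed

lemma inv_a: "inv a = a [^] (m - 1)"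
proof (rule inv_equality)
  show "a [^] (m - 1) \<otimes> a = \<one>"
    using m_pos a_pow_m by (metis Suc_diff_1 nat_pow_Suc)
qed simp_all

lemma inv_b: "inv b = b [^] (n - 1) \<otimes> a [^] ((m - 1) * l)"
proof (rule inv_equality[OF inv_comm])
  have "b \<otimes> (b [^] (n - 1) \<otimes> a [^] ((m - 1) * l)) = b [^] n \<otimes> a [^] ((m - 1) * l)"
    using n_pos by (metis Suc_diff_1 m_assoc nat_pow_Suc2 nat_pow_closed a_closed b_closed)
  also have "\<dots> = a [^] (l + (m - 1) * l)"
    by (simp add: b_pow_n nat_pow_mult)
  also have "\<dots> = a [^] (m * l)"
    using m_pos by (cases m) simp_all
  also have "\<dots> = \<one>"
    by (simp add: a_pow_m flip: nat_pow_pow)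
  finally show "b \<otimes> (b [^] (n - 1) \<otimes> a [^] ((m - 1) * l)) = \<one>" .
qed simp_all

lemma generate_normal_form:
  assumes "g \<in> generate G {a, b}"
  shows "\<exists>(J::nat) (I::nat). g = b [^] J \<otimes> a [^] I"
  using assms
proof (induction rule: generate.induct)
  case one
  show ?case
    by (rule exI[of _ "0::nat"], rule exI[of _ "0::nat"]) simp
next
  case (incl g)
  then have "g = b [^] (0::nat) \<otimes> a [^] (1::nat) \<or> g = b [^] (1::nat) \<otimes> a [^] (0::nat)"
    by auto
  then show ?case by blast
next
  case (inv g)
  then have "inv g = b [^] (0::nat) \<otimes> a [^] (m - 1) \<or> inv g = b [^] (n - 1) \<otimes> a [^] ((m - 1) * l)"
    by (auto simp: inv_a inv_b)
  then show ?case by blast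
next
  case (eng g g')
  then obtain J I J' I' :: nat where "g = b [^] J \<otimes> a [^] I" "g' = b [^] J' \<otimes> a [^] I'"
    by blast
  then show ?case
    by (auto simp: normal_form_mult)
qed

end

locale metacyclic_presentation = metacyclic_group +
  fixes h :: "'a \<Rightarrow> nat"
  assumes generated: "generate G {a, b} = carrier G"
    and h_hom: "h \<in> hom G model" and h_a: "h a = model_a" and h_b: "h b = model_b"
begin

lemma normal_form_exists:
  assumes "g \<in> carrier G"
  obtains j i where "j < n" "i < m" "g = b [^] j \<otimes> a [^] i"
proof -
  obtain J I :: nat where g: "g = b [^] J \<otimes> a [^] I"
    using generate_normal_form assms generated by blast
  show ?thesis
  proof (rule that)
    show "g = b [^] (J mod n) \<otimes> a [^] ((I + l * (J div n)) mod m)"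
      unfolding g by (rule normal_form_reduce)
  qed (simp_all add: m_pos n_pos)
qed

lemma h_normal_form: "h (b [^] J \<otimes> a [^] I) = encode (J, I)"
proof -
  have "h (b [^] J \<otimes> a [^] I) = h b [^]\<^bsub>model\<^esub> J \<otimes>\<^bsub>model\<^esub> h a [^]\<^bsub>model\<^esub> I"
    using h_hom by (simp add: hom_mult hom_nat_pow is_group model_group)
  then show ?thesis
    by (simp add: h_a h_b model_normal_form del: encode.simps)
qed

lemma normal_form_unique:
  assumes "j < n" "i < m" "j' < n" "i' < m" "b [^] j \<otimes> a [^] i = b [^] j' \<otimes> a [^] i'"
  shows "j = j' \<and> i = i'"
proof (rule encode_normal_inj[OF assms(1-4)])
  show "encode (j, i) = encode (j', i')"
    using assms(5) by (simp only: flip: h_normal_form)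
qed

lemma a_pow_eq_iff: "a [^] i = a [^] i' \<longleftrightarrow> [i = i'] (mod m)"
proof
  assume "a [^] i = a [^] i'"
  then have "h (b [^] (0::nat) \<otimes> a [^] i) = h (b [^] (0::nat) \<otimes> a [^] i')"
    by simp
  then show "[i = i'] (mod m)"
    by (simp only: h_normal_form) (simp add: cong_def)
qed (metis a_pow_mod cong_def)

lemma normal_form_central_iff:
  "b [^] J \<otimes> a [^] I \<in> group_center G \<longleftrightarrow> [k ^ J = 1] (mod m) \<and> [I * k = I] (mod m)"
proof -
  have "(b [^] J \<otimes> a [^] I) \<otimes> a = b [^] J \<otimes> a [^] (I + 1)"
    using normal_form_mult[of J I 0 1] by simp
  moreover have "a \<otimes> (b [^] J \<otimes> a [^] I) = b [^] J \<otimes> a [^] (k ^ J + I)"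
    using normal_form_mult[of 0 1 J I] by simp
  ultimately have "(b [^] J \<otimes> a [^] I) \<otimes> a = a \<otimes> (b [^] J \<otimes> a [^] I)
      \<longleftrightarrow> a [^] (I + 1) = a [^] (k ^ J + I)"
    by simp
  also have "\<dots> \<longleftrightarrow> [I + 1 = k ^ J + I] (mod m)"
    by (rule a_pow_eq_iff)
  also have "\<dots> \<longleftrightarrow> [k ^ J = 1] (mod m)"
    by (metis add.commute cong_add_lcancel_nat cong_sym_eq)
  finally have commute_a: "(b [^] J \<otimes> a [^] I) \<otimes> a = a \<otimes> (b [^] J \<otimes> a [^] I)
      \<longleftrightarrow> [k ^ J = 1] (mod m)" .
  have "(b [^] J \<otimes> a [^] I) \<otimes> b = b [^] Suc J \<otimes> a [^] (I * k)"
    using normal_form_mult[of J I 1 0] by simp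
  moreover have "b \<otimes> (b [^] J \<otimes> a [^] I) = b [^] Suc J \<otimes> a [^] I"
    using normal_form_mult[of 1 0 J I] by simp
  ultimately have "(b [^] J \<otimes> a [^] I) \<otimes> b = b \<otimes> (b [^] J \<otimes> a [^] I)
      \<longleftrightarrow> a [^] (I * k) = a [^] I"
    by simp
  also have "\<dots> \<longleftrightarrow> [I * k = I] (mod m)"
    by (rule a_pow_eq_iff)
  finally have commute_b: "(b [^] J \<otimes> a [^] I) \<otimes> b = b \<otimes> (b [^] J \<otimes> a [^] I)
      \<longleftrightarrow> [I * k = I] (mod m)" .
  show ?thesis
    using commute_a commute_b by (simp add: group_center_generate_iff[OF generated])
qed

lemma center_trivial_iff:
  "group_center G = {\<one>} \<longleftrightarrow>
     (\<forall>i<m. [i * k = i] (mod m) \<longrightarrow> i = 0) \<and> (\<forall>j<n. [k ^ j = 1] (mod m) \<longrightarrow> j = 0)"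
proof
  assume trivial: "group_center G = {\<one>}"
  have "j = 0 \<and> i = 0" if "j < n" "i < m" "[k ^ j = 1] (mod m)" "[i * k = i] (mod m)" for j i
  proof -
    have "b [^] j \<otimes> a [^] i \<in> group_center G"
      using that normal_form_central_iff by blast
    then have "b [^] j \<otimes> a [^] i = b [^] (0::nat) \<otimes> a [^] (0::nat)"
      using trivial by simp
    then show ?thesis
      using normal_form_unique[OF that(1,2)] m_pos n_pos by simp
  qed
  then show "(\<forall>i<m. [i * k = i] (mod m) \<longrightarrow> i = 0) \<and> (\<forall>j<n. [k ^ j = 1] (mod m) \<longrightarrow> j = 0)"
    using m_pos n_pos by (metis cong_refl mult_0 power_0)
next
  assume no_fixed: "(\<forall>i<m. [i * k = i] (mod m) \<longrightarrow> i = 0) \<and> (\<forall>j<n. [k ^ j = 1] (mod m) \<longrightarrow> j = 0)"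
  have "z = \<one>" if "z \<in> group_center G" for z
  proof -
    obtain j i where "j < n" "i < m" and z: "z = b [^] j \<otimes> a [^] i"
      using normal_form_exists \<open>z \<in> group_center G\<close> by (auto simp: group_center_def)
    then have "j = 0" "i = 0"
      using no_fixed normal_form_central_iff \<open>z \<in> group_center G\<close> by auto
    then show ?thesis
      by (simp add: z)
  qed
  then show "group_center G = {\<one>}"
    by (auto simp: group_center_def)
qed

end

theorem lemma2p2:
  fixes k l m n :: nat and G :: "('g, 'e) monoid_scheme" and a b :: 'g
  assumes "0 < k" "0 < l" "0 < m" "0 < n"
    and "[k ^ n = 1] (mod m)"
    and "[l * (k - 1) = 0] (mod m)"
    and "presents_meta G a b m n k l"
  shows "group_center G = {\<one>\<^bsub>G\<^esub>} \<longleftrightarrow> gcd m (k - 1) = 1 \<and> n = ind_mod m k"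
proof -
  have group: "group G" and rels: "meta_rels G a b m n k l"
    and generated: "generate G {a, b} = carrier G"
    and universal: "\<And>(H :: nat monoid) x y. group H \<Longrightarrow> meta_rels H x y m n k l \<Longrightarrow>
      \<exists>h \<in> hom G H. h a = x \<and> h b = y"
    using assms(7) unfolding presents_meta_def by blast+
  have "[l * k = l] (mod m)"
    using assms(6) cong_mult_eq_self_iff_dvd[OF \<open>0 < k\<close>] by (simp add: cong_0_iff)
  then interpret metacyclic_params m n k l
    using assms by unfold_locales
  obtain h where "h \<in> hom G model" "h a = model_a" "h b = model_b"
    using universal[OF model_group model_rels] by blast
  then interpret metacyclic_presentation m n k l G a b h
    using group rels generated
    by (intro metacyclic_presentation.intro metacyclic_group.intro metacyclic_group_axioms.intro
        metacyclic_presentation_axioms.intro metacyclic_params_axioms)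
  show ?thesis
    using center_trivial_iff ind_mod_eq_iff[OF \<open>0 < n\<close> assms(5)]
      gcd_eq_1_iff_annihilator_trivial[OF \<open>0 < m\<close>] cong_mult_eq_self_iff_dvd[OF \<open>0 < k\<close>]
    by simp
qed

end
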